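(* Let $c$ be a positive measurable function on $(T,+\infty)$ such that $c(t)e^{-t}$ is decreasing on $(T,+\infty)$ and $\int_{T_1}^{+\infty}c(t)e^{-t}dt<+\infty$ for some $T_1>T$. Then there is a positive measurable function $\tilde c$ on $(T,+\infty)$ such that (1) $\tilde c\ge c$ on $(T,+\infty)$; (2) $\tilde c(t)e^{-t}$ is strictly decreasing on $(T,+\infty)$ and $\tilde c$ is increasing on $(a,+\infty)$ for some real number $a>T$; (3) $\int_{T_1}^{+\infty}\tilde c(t)e^{-t}dt<+\infty$. Moreover, if $\int_T^{+\infty}c(t)e^{-t}dt<+\infty$ and $c\in\mathcal{P}_T$, then $\tilde c$ can be chosen to satisfy (1)–(3) and in addition $\int_T^{+\infty}\tilde c(t)e^{-t}dt<+\infty$ and $\tilde c\in\mathcal{P}_T$.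
   Context: For the "moreover" part: $M$ is a complex manifold, $\psi$ is plurisubharmonic on $M$ with $T=-\sup_M\psi$, and $\varphi$ is Lebesgue measurable with $\varphi+\psi$ plurisubharmonic. $\mathcal{P}_T$ is the class of positive measurable functions $c$ on $(T,+\infty)$ such that $c(t)e^{-t}$ is decreasing and there is a closed subset $E\subset M$ with $E\subset\{z\in Z:\psi(z)=-\infty\}$ for some analytic subset $Z$ of $M$, such that $e^{-\varphi}c(-\psi)$ has a positive lower bound on every compact subset of $M\setminus E$. *)

theory Defs
  imports "HOL-Analysis.Analysis"
begin

definition pos_meas_on :: "real \<Rightarrow> (real \<Rightarrow> real) \<Rightarrow> bool" where
  "pos_meas_on T c \<longleftrightarrow> (\<forall>t>T. 0 < c t) \<and> set_borel_measurable lborel {T<..} c"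

definition ce_decr :: "real \<Rightarrow> (real \<Rightarrow> real) \<Rightarrow> bool" where
  "ce_decr T c \<longleftrightarrow> (\<forall>s t. T < s \<and> s \<le> t \<longrightarrow> c t * exp (- t) \<le> c s * exp (- s))"

definition ce_strict_decr :: "real \<Rightarrow> (real \<Rightarrow> real) \<Rightarrow> bool" where
  "ce_strict_decr T c \<longleftrightarrow> (\<forall>s t. T < s \<and> s < t \<longrightarrow> c t * exp (- t) < c s * exp (- s))"

definition ce_int_finite :: "real \<Rightarrow> (real \<Rightarrow> real) \<Rightarrow> bool" where
  "ce_int_finite A c \<longleftrightarrow> (\<integral>\<^sup>+ t \<in> {A<..}. ennreal (c t * exp (- t)) \<partial>lborel) < \<infinity>"

text \<open>The class P_T, relative to an (abstract) space M (the carrier type 'a), a family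
  Analytic of subsets playing the role of the analytic subsets of M, and the functions
  psi (with values in [-infinity, +infinity)) and phi.  The lower bound of
  e^{-phi} c(-psi) is required at those points where -psi lies in the domain (T,+infinity)
  of c.\<close>
definition in_PT :: "'a::topological_space set set \<Rightarrow> ('a \<Rightarrow> ereal) \<Rightarrow> ('a \<Rightarrow> real) \<Rightarrow> real
    \<Rightarrow> (real \<Rightarrow> real) \<Rightarrow> bool" where
  "in_PT Analytic psi phi T c \<longleftrightarrow>
     pos_meas_on T c \<and> ce_decr T c \<and>
     (\<exists>E Z. closed E \<and> Z \<in> Analytic \<and> E \<subseteq> {z \<in> Z. psi z = - \<infinity>} \<and>
        (\<forall>K. compact K \<and> K \<subseteq> UNIV - E \<longrightarrow>
           (\<exists>b>0. \<forall>z\<in>K. ereal T < - psi z \<and> - psi z < \<infinity> \<longrightarrow>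
                b \<le> exp (- phi z) * c (real_of_ereal (- psi z)))))"

end

theory Submission
  imports Defs
begin

(* On (T1, +infinity) replace c by its running supremum M(t) = sup c over (T1, t].  M is increasing,
   and because c(s) e^{-s} decreases, c(u) <= c(s) e^{t-s} for T < s <= u <= t; hence M(t) e^{-t}
   still decreases and, splitting (T1, t] at the midpoint m = (t + T1)/2,
   M(t) e^{-t} <= (c(m) + c(T1)) e^{-m}, which is integrable over (T1, +infinity) by the substitution
   t -> m.  Adding 1 makes the weight strictly decreasing and keeps all integrals finite; a weight that
   dominates c inherits the lower bound defining P_T. *)

lemma ce_decr_iff:
  "ce_decr T c \<longleftrightarrow> (\<forall>s t. T < s \<and> s \<le> t \<longrightarrow> c t \<le> c s * exp (t - s))"
proof -
  have "c t * exp (- t) \<le> c s * exp (- s) \<longleftrightarrow> c t \<le> c s * exp (t - s)" for s t :: real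
  proof -
    have "c t * exp (- t) \<le> c s * exp (- s) \<longleftrightarrow> c t * exp (- t) * exp t \<le> c s * exp (- s) * exp t"
      by simp
    also have "\<dots> \<longleftrightarrow> c t \<le> c s * exp (t - s)"
      by (simp add: exp_minus exp_diff field_simps)
    finally show ?thesis .
  qed
  then show ?thesis
    unfolding ce_decr_def by blast
qed

lemma ce_strict_decr_add_one:
  assumes "ce_decr T f"
  shows "ce_strict_decr T (\<lambda>t. f t + 1)"
  unfolding ce_strict_decr_def
proof (intro allI impI)
  fix s t assume st: "T < s \<and> s < t"
  then have "f t * exp (- t) \<le> f s * exp (- s)"
    using assms unfolding ce_decr_def by auto
  moreover have "exp (- t) < exp (- s)"
    using st by simp
  ultimately show "(f t + 1) * exp (- t) < (f s + 1) * exp (- s)"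
    by (simp only: distrib_right mult_1_left)
qed

lemma ce_strict_decr_imp_ce_decr: "ce_strict_decr T f \<Longrightarrow> ce_decr T f"
  unfolding ce_strict_decr_def ce_decr_def by (metis order_le_less order_refl)

lemma ce_integrand_measurable:
  assumes "set_borel_measurable lborel {A<..} f"
  shows "(\<lambda>t. ennreal (f t * exp (- t)) * indicator {A<..} t) \<in> borel_measurable borel"
proof -
  have [measurable]: "(\<lambda>t. indicator {A<..} t *\<^sub>R f t) \<in> borel_measurable borel"
    using assms unfolding set_borel_measurable_def by simp
  have "(\<lambda>t. ennreal (f t * exp (- t)) * indicator {A<..} t)
      = (\<lambda>t. ennreal ((indicator {A<..} t *\<^sub>R f t) * exp (- t)))"
    by (auto simp: indicator_def fun_eq_iff)
  also have "\<dots> \<in> borel_measurable borel"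
    by measurable
  finally show ?thesis .
qed

lemma ce_int_finite_mono:
  assumes "\<And>t. A < t \<Longrightarrow> f t \<le> g t" and "ce_int_finite A g"
  shows "ce_int_finite A f"
proof -
  have "(\<integral>\<^sup>+t\<in>{A<..}. ennreal (f t * exp (- t)) \<partial>lborel) \<le> (\<integral>\<^sup>+t\<in>{A<..}. ennreal (g t * exp (- t)) \<partial>lborel)"
    using assms(1) by (intro nn_integral_mono) (auto intro!: ennreal_leI split: split_indicator)
  then show ?thesis
    using assms(2) unfolding ce_int_finite_def by (rule le_less_trans)
qed

lemma ce_int_finite_add:
  assumes "set_borel_measurable lborel {A<..} f" "set_borel_measurable lborel {A<..} g"
    and "\<And>t. A < t \<Longrightarrow> 0 \<le> f t" "\<And>t. A < t \<Longrightarrow> 0 \<le> g t"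
    and "ce_int_finite A f" "ce_int_finite A g"
  shows "ce_int_finite A (\<lambda>t. f t + g t)"
proof -
  have "(\<integral>\<^sup>+t\<in>{A<..}. ennreal ((f t + g t) * exp (- t)) \<partial>lborel)
      = (\<integral>\<^sup>+t. ennreal (f t * exp (- t)) * indicator {A<..} t + ennreal (g t * exp (- t)) * indicator {A<..} t \<partial>lborel)"
    using assms(3,4) by (intro nn_integral_cong) (auto simp: distrib_right ennreal_plus split: split_indicator)
  also have "\<dots> = (\<integral>\<^sup>+t\<in>{A<..}. ennreal (f t * exp (- t)) \<partial>lborel) + (\<integral>\<^sup>+t\<in>{A<..}. ennreal (g t * exp (- t)) \<partial>lborel)"
    using ce_integrand_measurable[OF assms(1)] ce_integrand_measurable[OF assms(2)]
    by (intro nn_integral_add) auto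
  also have "\<dots> < \<infinity>"
    using assms(5,6) unfolding ce_int_finite_def by simp
  finally show ?thesis
    unfolding ce_int_finite_def .
qed

lemma ce_int_finite_exp:
  assumes "0 \<le> k" and "r < 1"
  shows "ce_int_finite A (\<lambda>t. k * exp (r * t))"
proof -
  have integral: "((\<lambda>t. k * exp (- (1 - r) * t)) has_integral k * (exp (- (1 - r) * A) / (1 - r))) {A..}"
    using has_integral_exp_minus_to_infinity[of "1 - r" A] assms(2) by (intro has_integral_mult_right) auto
  have "(\<integral>\<^sup>+t. ennreal (k * exp (- (1 - r) * t)) * indicator {A..} t \<partial>lborel)
      = ennreal (k * (exp (- (1 - r) * A) / (1 - r)))"
    by (rule nn_integral_has_integral_lebesgue'[OF _ integral]) (use assms(1) in auto)
  moreover have "(\<integral>\<^sup>+t\<in>{A<..}. ennreal (k * exp (r * t) * exp (- t)) \<partial>lborel)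
      \<le> (\<integral>\<^sup>+t. ennreal (k * exp (- (1 - r) * t)) * indicator {A..} t \<partial>lborel)"
    by (intro nn_integral_mono) (auto simp: algebra_simps mult_exp_exp split: split_indicator)
  ultimately show ?thesis
    unfolding ce_int_finite_def by (simp add: le_less_trans)
qed

lemma ce_int_finite_midpoint:
  assumes "set_borel_measurable lborel {a<..} c" and "ce_int_finite a c"
  shows "ce_int_finite a (\<lambda>t. c ((t + a) / 2) * exp ((t - a) / 2))"
proof -
  let ?w = "\<lambda>u. ennreal (c u * exp (- u)) * indicator {a<..} u"
  have "integral\<^sup>N lborel ?w = ennreal \<bar>1 / 2\<bar> * (\<integral>\<^sup>+t. ?w (a / 2 + 1 / 2 * t) \<partial>lborel)"
    by (rule nn_integral_real_affine) (auto intro: ce_integrand_measurable[OF assms(1)])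
  also have "(\<lambda>t. ?w (a / 2 + 1 / 2 * t))
      = (\<lambda>t. ennreal (c ((t + a) / 2) * exp ((t - a) / 2) * exp (- t)) * indicator {a<..} t)"
  proof -
    have "exp ((t - a) / 2) * exp (- t) = exp (- (a / 2 + 1 / 2 * t))" for t
      by (simp add: mult_exp_exp field_simps)
    then show ?thesis
      by (auto simp: fun_eq_iff mult.assoc add_divide_distrib add.commute split: split_indicator)
  qed
  finally show ?thesis
    using assms(2) unfolding ce_int_finite_def by (auto simp: ennreal_mult_less_top)
qed

lemma ce_int_finite_from_tail:
  assumes "set_borel_measurable lborel {T<..} c" "set_borel_measurable lborel {a<..} f"
    and "\<And>t. T < t \<Longrightarrow> t \<le> a \<Longrightarrow> f t \<le> c t"
    and "ce_int_finite T c" "ce_int_finite a f"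
  shows "ce_int_finite T f"
proof -
  have "(\<integral>\<^sup>+t\<in>{T<..}. ennreal (f t * exp (- t)) \<partial>lborel)
      \<le> (\<integral>\<^sup>+t. ennreal (c t * exp (- t)) * indicator {T<..} t + ennreal (f t * exp (- t)) * indicator {a<..} t \<partial>lborel)"
    using assms(3) by (intro nn_integral_mono) (auto intro!: ennreal_leI split: split_indicator)
  also have "\<dots> = (\<integral>\<^sup>+t\<in>{T<..}. ennreal (c t * exp (- t)) \<partial>lborel) + (\<integral>\<^sup>+t\<in>{a<..}. ennreal (f t * exp (- t)) \<partial>lborel)"
    using ce_integrand_measurable[OF assms(1)] ce_integrand_measurable[OF assms(2)]
    by (intro nn_integral_add) auto
  also have "\<dots> < \<infinity>"
    using assms(4,5) unfolding ce_int_finite_def by simp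
  finally show ?thesis
    unfolding ce_int_finite_def .
qed

lemma set_borel_measurable_midpoint:
  fixes a :: real and c :: "real \<Rightarrow> real"
  assumes "set_borel_measurable lborel {a<..} c"
  shows "set_borel_measurable lborel {a<..} (\<lambda>t. c ((t + a) / 2) * exp ((t - a) / 2))"
proof -
  have [measurable]: "(\<lambda>t. indicator {a<..} t *\<^sub>R c t) \<in> borel_measurable borel"
    using assms unfolding set_borel_measurable_def by simp
  have "(\<lambda>t. indicator {a<..} t *\<^sub>R (c ((t + a) / 2) * exp ((t - a) / 2)))
      = (\<lambda>t. (indicator {a<..} ((t + a) / 2) *\<^sub>R c ((t + a) / 2)) * exp ((t - a) / 2))"
    by (auto simp: fun_eq_iff split: split_indicator)
  also have "\<dots> \<in> borel_measurable lborel"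
    by measurable
  finally show ?thesis
    unfolding set_borel_measurable_def .
qed

lemma pos_meas_on_add_one:
  assumes "set_borel_measurable lborel {T<..} f" and "\<And>t. T < t \<Longrightarrow> 0 \<le> f t"
  shows "pos_meas_on T (\<lambda>t. f t + 1)"
proof -
  have [measurable]: "(\<lambda>t. indicator {T<..} t *\<^sub>R f t) \<in> borel_measurable borel"
    using assms(1) unfolding set_borel_measurable_def by simp
  have "(\<lambda>t. indicator {T<..} t *\<^sub>R (f t + 1)) = (\<lambda>t. indicator {T<..} t *\<^sub>R f t + indicator {T<..} t)"
    by (auto simp: fun_eq_iff split: split_indicator)
  also have "\<dots> \<in> borel_measurable lborel"
    by measurable
  finally show ?thesis
    using assms(2) unfolding pos_meas_on_def set_borel_measurable_def by (auto simp: add_nonneg_pos)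
qed

lemma ce_int_finite_add_one:
  assumes "set_borel_measurable lborel {A<..} f" and "\<And>t. A < t \<Longrightarrow> 0 \<le> f t" and "ce_int_finite A f"
  shows "ce_int_finite A (\<lambda>t. f t + 1)"
proof -
  have "ce_int_finite A (\<lambda>_. 1)"
    using ce_int_finite_exp[of 1 0 A] by simp
  moreover have "set_borel_measurable lborel {A<..} (\<lambda>_. 1 :: real)"
    unfolding set_borel_measurable_def by simp
  ultimately show ?thesis
    using assms by (intro ce_int_finite_add) auto
qed

definition running_sup :: "real \<Rightarrow> (real \<Rightarrow> real) \<Rightarrow> real \<Rightarrow> real" where
  "running_sup a c t = (if t \<le> a then c t else Sup (c ` {a<..t}))"

context
  fixes T a :: real and c :: "real \<Rightarrow> real"
  assumes decr: "ce_decr T c" and nonneg: "\<And>t. T < t \<Longrightarrow> 0 \<le> c t" and "T < a"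
begin

private lemma le_exp_growth: "T < s \<Longrightarrow> s \<le> u \<Longrightarrow> u \<le> t \<Longrightarrow> c u \<le> c s * exp (t - s)"
  using decr nonneg[of s] unfolding ce_decr_iff
  by (meson exp_le_cancel_iff diff_right_mono mult_left_mono order_trans)

private lemma bdd_above_Ioc: "bdd_above (c ` {a<..t})"
  using le_exp_growth[of a _ t] \<open>T < a\<close> by (intro bdd_aboveI2[of _ _ "c a * exp (t - a)"]) auto

lemma le_running_sup: "a < u \<Longrightarrow> u \<le> t \<Longrightarrow> c u \<le> running_sup a c t"
  unfolding running_sup_def by (auto intro: cSup_upper bdd_above_Ioc)

lemma running_sup_le: "a < t \<Longrightarrow> (\<And>u. a < u \<Longrightarrow> u \<le> t \<Longrightarrow> c u \<le> B) \<Longrightarrow> running_sup a c t \<le> B"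
  unfolding running_sup_def by (auto intro: cSup_least)

lemma running_sup_ge: "c t \<le> running_sup a c t"
  using le_running_sup[of t t] unfolding running_sup_def by auto

lemma running_sup_nonneg: "T < t \<Longrightarrow> 0 \<le> running_sup a c t"
  using nonneg running_sup_ge order_trans by blast

lemma running_sup_mono: "a < s \<Longrightarrow> s \<le> t \<Longrightarrow> running_sup a c s \<le> running_sup a c t"
  using le_running_sup by (intro running_sup_le) auto

lemma ce_decr_running_sup: "ce_decr T (running_sup a c)"
  unfolding ce_decr_iff
proof (intro allI impI)
  fix s t assume st: "T < s \<and> s \<le> t"
  have exp_ge: "running_sup a c s \<le> running_sup a c s * exp (r - s)" if "s \<le> r" for r
    using running_sup_nonneg[of s] st that by (simp add: mult_le_cancel_left1)
  show "running_sup a c t \<le> running_sup a c s * exp (t - s)"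
  proof (cases "t \<le> a")
    case True
    then show ?thesis
      using decr st unfolding ce_decr_iff running_sup_def by auto
  next
    case False
    show ?thesis
    proof (rule running_sup_le)
      fix u assume u: "a < u" "u \<le> t"
      show "c u \<le> running_sup a c s * exp (t - s)"
      proof (cases "u \<le> s")
        case True
        then show ?thesis
          using le_running_sup[of u s] exp_ge[of t] u st by linarith
      next
        case False
        have "c u \<le> c s * exp (t - s)"
          using le_exp_growth[of s u t] st u False by simp
        also have "\<dots> \<le> running_sup a c s * exp (t - s)"
          by (simp add: running_sup_ge)
        finally show ?thesis .
      qed
    qed (use False in simp)
  qed
qed

lemma running_sup_le_midpoint:
  assumes "a < t"
  shows "running_sup a c t \<le> (c ((t + a) / 2) + c a) * exp ((t - a) / 2)"
proof (rule running_sup_le[OF assms])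
  fix u assume u: "a < u" "u \<le> t"
  have half: "t - (t + a) / 2 = (t - a) / 2" "(t + a) / 2 - a = (t - a) / 2"
    by (simp_all add: field_simps)
  have "0 \<le> c ((t + a) / 2) * exp ((t - a) / 2)" "0 \<le> c a * exp ((t - a) / 2)"
    using nonneg[of a] nonneg[of "(t + a) / 2"] \<open>T < a\<close> assms by auto
  moreover have "c u \<le> c ((t + a) / 2) * exp ((t - a) / 2)" if "(t + a) / 2 \<le> u"
    using le_exp_growth[of "(t + a) / 2" u t] that u \<open>T < a\<close> assms half(1) by simp
  moreover have "c u \<le> c a * exp ((t - a) / 2)" if "u \<le> (t + a) / 2"
    using le_exp_growth[of a u "(t + a) / 2"] that u \<open>T < a\<close> half(2) by simp
  ultimately show "c u \<le> (c ((t + a) / 2) + c a) * exp ((t - a) / 2)"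
    by (cases "(t + a) / 2 \<le> u") (auto simp: distrib_right)
qed

lemma set_borel_measurable_running_sup:
  assumes "set_borel_measurable lborel {T<..} c"
  shows "set_borel_measurable lborel {T<..} (running_sup a c)"
proof -
  have [measurable]: "(\<lambda>t. indicator {T<..} t *\<^sub>R c t) \<in> borel_measurable borel"
    using assms unfolding set_borel_measurable_def by simp
  have "mono (\<lambda>t. if t \<le> a then 0 else running_sup a c t)"
    using running_sup_mono running_sup_nonneg \<open>T < a\<close> unfolding mono_def by fastforce
  then have [measurable]: "(\<lambda>t. if t \<le> a then 0 else running_sup a c t) \<in> borel_measurable borel"
    by (rule borel_measurable_mono)
  have "(\<lambda>t. indicator {T<..} t *\<^sub>R running_sup a c t)
      = (\<lambda>t. indicator {..a} t * (indicator {T<..} t *\<^sub>R c t) + (if t \<le> a then 0 else running_sup a c t))"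
    using \<open>T < a\<close> by (auto simp: fun_eq_iff running_sup_def split: split_indicator)
  also have "\<dots> \<in> borel_measurable lborel"
    by measurable
  finally show ?thesis
    unfolding set_borel_measurable_def .
qed

lemma ce_int_finite_running_sup:
  assumes meas: "set_borel_measurable lborel {T<..} c" and "ce_int_finite a c"
  shows "ce_int_finite a (running_sup a c)"
proof (rule ce_int_finite_mono)
  have exp_split: "exp ((t - a) / 2) = exp (- a / 2) * exp (1 / 2 * t)" for t
    by (simp add: mult_exp_exp field_simps)
  show "running_sup a c t \<le> c ((t + a) / 2) * exp ((t - a) / 2) + c a * exp (- a / 2) * exp (1 / 2 * t)"
    if "a < t" for t
    using running_sup_le_midpoint[OF that] by (simp add: distrib_right exp_split mult.assoc)
  have meas_a: "set_borel_measurable lborel {a<..} c"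
    by (rule set_borel_measurable_subset[OF meas]) (use \<open>T < a\<close> in auto)
  show "ce_int_finite a (\<lambda>t. c ((t + a) / 2) * exp ((t - a) / 2) + c a * exp (- a / 2) * exp (1 / 2 * t))"
  proof (rule ce_int_finite_add)
    show "set_borel_measurable lborel {a<..} (\<lambda>t. c a * exp (- a / 2) * exp (1 / 2 * t))"
      unfolding set_borel_measurable_def by measurable
    show "ce_int_finite a (\<lambda>t. c a * exp (- a / 2) * exp (1 / 2 * t))"
      using nonneg[of a] \<open>T < a\<close> by (intro ce_int_finite_exp) auto
  qed (use set_borel_measurable_midpoint[OF meas_a] ce_int_finite_midpoint[OF meas_a assms(2)]
      nonneg \<open>T < a\<close> in auto)
qed


lemma pos_meas_on_running_sup_add_one:
  "set_borel_measurable lborel {T<..} c \<Longrightarrow> pos_meas_on T (\<lambda>t. running_sup a c t + 1)"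
  by (intro pos_meas_on_add_one set_borel_measurable_running_sup running_sup_nonneg)

lemma ce_int_finite_a_running_sup_add_one:
  assumes meas: "set_borel_measurable lborel {T<..} c" and "ce_int_finite a c"
  shows "ce_int_finite a (\<lambda>t. running_sup a c t + 1)"
proof (rule ce_int_finite_add_one)
  show "set_borel_measurable lborel {a<..} (running_sup a c)"
    by (rule set_borel_measurable_subset[OF set_borel_measurable_running_sup[OF meas]])
      (use \<open>T < a\<close> in auto)
qed (use running_sup_nonneg \<open>T < a\<close> ce_int_finite_running_sup[OF assms] in auto)

lemma ce_int_finite_T_running_sup_add_one:
  assumes meas: "set_borel_measurable lborel {T<..} c" and "ce_int_finite a c" and "ce_int_finite T c"
  shows "ce_int_finite T (\<lambda>t. running_sup a c t + 1)"
proof (rule ce_int_finite_add_one)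
  show "ce_int_finite T (running_sup a c)"
  proof (rule ce_int_finite_from_tail[OF meas _ _ assms(3) ce_int_finite_running_sup[OF assms(1,2)]])
    show "set_borel_measurable lborel {a<..} (running_sup a c)"
      by (rule set_borel_measurable_subset[OF set_borel_measurable_running_sup[OF meas]])
        (use \<open>T < a\<close> in auto)
  qed (simp add: running_sup_def)
qed (use set_borel_measurable_running_sup[OF meas] running_sup_nonneg in auto)

end

lemma in_PT_mono:
  assumes "in_PT Analytic psi phi T c" and "pos_meas_on T c'" and "ce_decr T c'"
    and "\<And>t. T < t \<Longrightarrow> c t \<le> c' t"
  shows "in_PT Analytic psi phi T c'"
proof -
  obtain E Z where EZ: "closed E" "Z \<in> Analytic" "E \<subseteq> {z \<in> Z. psi z = - \<infinity>}"
    and bound: "\<forall>K. compact K \<and> K \<subseteq> UNIV - E \<longrightarrow> (\<exists>b>0. \<forall>z\<in>K. ereal T < - psi z \<and> - psi z < \<infinity> \<longrightarrow>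
        b \<le> exp (- phi z) * c (real_of_ereal (- psi z)))"
    using assms(1) unfolding in_PT_def by (elim conjE exE)
  have "\<exists>b>0. \<forall>z\<in>K. ereal T < - psi z \<and> - psi z < \<infinity> \<longrightarrow>
      b \<le> exp (- phi z) * c' (real_of_ereal (- psi z))" if K: "compact K \<and> K \<subseteq> UNIV - E" for K
  proof -
    obtain b where "b > 0" and b: "\<forall>z\<in>K. ereal T < - psi z \<and> - psi z < \<infinity> \<longrightarrow>
        b \<le> exp (- phi z) * c (real_of_ereal (- psi z))"
      using bound[rule_format, OF K] by blast
    have "b \<le> exp (- phi z) * c' (real_of_ereal (- psi z))"
      if "z \<in> K" "ereal T < - psi z" "- psi z < \<infinity>" for z
    proof -
      have "T < real_of_ereal (- psi z)"
        using that(2,3) by (cases "- psi z") auto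
      have "b \<le> exp (- phi z) * c (real_of_ereal (- psi z))"
        using b that by blast
      also have "\<dots> \<le> exp (- phi z) * c' (real_of_ereal (- psi z))"
        using assms(4)[OF \<open>T < real_of_ereal (- psi z)\<close>] by simp
      finally show ?thesis .
    qed
    with \<open>b > 0\<close> show ?thesis
      by blast
  qed
  then have bound': "\<forall>K. compact K \<and> K \<subseteq> UNIV - E \<longrightarrow> (\<exists>b>0. \<forall>z\<in>K. ereal T < - psi z \<and> - psi z < \<infinity> \<longrightarrow>
      b \<le> exp (- phi z) * c' (real_of_ereal (- psi z)))"
    by blast
  show ?thesis
    unfolding in_PT_def using assms(2,3) EZ bound' by (intro conjI exI[of _ E] exI[of _ Z])
qed

theorem lemma2p10:
  fixes T T1 :: real and c :: "real \<Rightarrow> real"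
  assumes "pos_meas_on T c" and "ce_decr T c" and "T1 > T" and "ce_int_finite T1 c"
  shows "(\<exists>c'. pos_meas_on T c' \<and> (\<forall>t>T. c t \<le> c' t) \<and> ce_strict_decr T c' \<and>
            (\<exists>a>T. \<forall>s t. a < s \<and> s \<le> t \<longrightarrow> c' s \<le> c' t) \<and> ce_int_finite T1 c')
       \<and> (\<forall>(Analytic :: 'a::topological_space set set) psi phi.
            ereal T = - (SUP z. psi z) \<and> ce_int_finite T c \<and> in_PT Analytic psi phi T c \<longrightarrow>
            (\<exists>c'. pos_meas_on T c' \<and> (\<forall>t>T. c t \<le> c' t) \<and> ce_strict_decr T c' \<and>
              (\<exists>a>T. \<forall>s t. a < s \<and> s \<le> t \<longrightarrow> c' s \<le> c' t) \<and> ce_int_finite T1 c' \<and>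
              ce_int_finite T c' \<and> in_PT Analytic psi phi T c'))"
proof -
  have meas: "set_borel_measurable lborel {T<..} c" and nonneg: "\<And>t. T < t \<Longrightarrow> 0 \<le> c t"
    using assms(1) unfolding pos_meas_on_def by (auto simp: less_imp_le)
  note weight = assms(2) nonneg assms(3)
  define c' where "c' = (\<lambda>t. running_sup T1 c t + 1)"
  have pos: "pos_meas_on T c'"
    unfolding c'_def by (rule pos_meas_on_running_sup_add_one[OF weight meas])
  have ge: "c t \<le> c' t" if "T < t" for t
    using running_sup_ge[OF weight, of t] unfolding c'_def by simp
  have strict: "ce_strict_decr T c'"
    unfolding c'_def by (rule ce_strict_decr_add_one[OF ce_decr_running_sup[OF weight]])
  have "\<forall>s t. T1 < s \<and> s \<le> t \<longrightarrow> c' s \<le> c' t"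
    using running_sup_mono[OF weight] unfolding c'_def by simp
  then have incr: "\<exists>a>T. \<forall>s t. a < s \<and> s \<le> t \<longrightarrow> c' s \<le> c' t"
    using assms(3) by blast
  have int_T1: "ce_int_finite T1 c'"
    unfolding c'_def by (rule ce_int_finite_a_running_sup_add_one[OF weight meas assms(4)])
  have int_T: "ce_int_finite T c'" if "ce_int_finite T c"
    unfolding c'_def by (rule ce_int_finite_T_running_sup_add_one[OF weight meas assms(4) that])
  have PT: "in_PT Analytic psi phi T c'" if "in_PT Analytic psi phi T c" for Analytic :: "'a set set" and psi phi
    using in_PT_mono[OF that pos ce_strict_decr_imp_ce_decr[OF strict] ge] .
  show ?thesis
    using pos ge strict incr int_T1 int_T PT by blast
qed

end
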